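(* Assume the continuum hypothesis. Let $(\mathbb{R},\mathcal{C})$ be a category base such that: (a) it is point-meager; (b) it satisfies the countable chain condition; (c) $\mathcal{C}$ is linearly invariant; (d) $\operatorname{card}(\mathcal{C})\le 2^{\aleph_0}$; and (e) $\mathbb{R}$ is abundant in $(\mathbb{R},\mathcal{C})$. Then there exist sets $E,F\subseteq\mathbb{R}$ such that (i) both $E$ and $F$ are rare sets in the category base $(\mathbb{R},\mathcal{C})$; (ii) both $E$ and $F$ are vector spaces over the field $\mathbb{Q}$ of rational numbers (i.e. $\mathbb{Q}$-linear subspaces of $\mathbb{R}$); (iii) $\mathbb{R}=E+F=\{e+f:e\in E,\ f\in F\}$ and $E\cap F=\{0\}$.
   Context: A category base is a pair $(X,\mathcal{C})$ with $X$ a nonempty set and $\mathcal{C}$ a family of subsets of $X$ whose nonempty members (called regions) satisfy: (1) $X=\bigcup\mathcal{C}$; (2) for every region $A$ and every nonempty family $\mathcal{D}$ of pairwise disjoint regions with $\operatorname{card}(\mathcal{D})<\operatorname{card}(\mathcal{C})$: (i) if $A\cap\bigcup\mathcal{D}$ contains a region, then there is $D\in\mathcal{D}$ such that $A\cap D$ contains a region; (ii) if $A\cap\bigcup\mathcal{D}$ contains no region, then there is a region $B\subseteq A$ disjoint from every region in $\mathcal{D}$. A set $S\subseteq X$ is singular if every region contains a subregion disjoint from $S$; a set is meager if it is a countable union of singular sets, and abundant otherwise. The base is point-meager if every singleton is meager. It satisfies the countable chain condition (c.c.c.) if every family of pairwise disjoint regions is at most countable. For $X=\mathbb{R}$, $\mathcal{C}$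 is linearly invariant if for every $E\in\mathcal{C}$, every $r\in\mathbb{R}$ and every nonzero $\lambda\in\mathbb{R}$, the sets $E+r=\{x+r:x\in E\}$ and $\lambda E=\{\lambda x:x\in E\}$ belong to $\mathcal{C}$. A set $R\subseteq X$ is a rare set in $(X,\mathcal{C})$ if $R$ is uncountable and $R\cap M$ is countable for every meager set $M$ of $(X,\mathcal{C})$. *)

theory Defs
  imports "HOL-Analysis.Analysis" "HOL-Library.Equipollence"
begin

definition region :: "'a set set \<Rightarrow> 'a set \<Rightarrow> bool" where
  "region C A \<longleftrightarrow> A \<in> C \<and> A \<noteq> {}"

definition category_base :: "'a set \<Rightarrow> 'a set set \<Rightarrow> bool" where
  "category_base X C \<longleftrightarrow>
     X \<noteq> {} \<and> C \<subseteq> Pow X \<and> X = \<Union>C \<and>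
     (\<forall>A D. region C A \<and> D \<noteq> {} \<and> (\<forall>B\<in>D. region C B) \<and>
            pairwise disjnt D \<and> D \<prec> C \<longrightarrow>
        ((\<exists>B. region C B \<and> B \<subseteq> A \<inter> \<Union>D) \<longrightarrow>
            (\<exists>E\<in>D. \<exists>B. region C B \<and> B \<subseteq> A \<inter> E)) \<and>
        (\<not>(\<exists>B. region C B \<and> B \<subseteq> A \<inter> \<Union>D) \<longrightarrow>
            (\<exists>B. region C B \<and> B \<subseteq> A \<and> (\<forall>E\<in>D. B \<inter> E = {}))))"

definition singular :: "'a set set \<Rightarrow> 'a set \<Rightarrow> bool" where
  "singular C S \<longleftrightarrow> (\<forall>A. region C A \<longrightarrow> (\<exists>B. region C B \<and> B \<subseteq> A \<and> B \<inter> S = {}))"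

definition meager :: "'a set set \<Rightarrow> 'a set \<Rightarrow> bool" where
  "meager C M \<longleftrightarrow> (\<exists>F. countable F \<and> (\<forall>S\<in>F. singular C S) \<and> M = \<Union>F)"

definition abundant :: "'a set set \<Rightarrow> 'a set \<Rightarrow> bool" where
  "abundant C S \<longleftrightarrow> \<not> meager C S"

definition point_meager :: "'a set \<Rightarrow> 'a set set \<Rightarrow> bool" where
  "point_meager X C \<longleftrightarrow> (\<forall>x\<in>X. meager C {x})"

definition ccc :: "'a set set \<Rightarrow> bool" where
  "ccc C \<longleftrightarrow> (\<forall>D. (\<forall>B\<in>D. region C B) \<and> pairwise disjnt D \<longrightarrow> countable D)"

definition linearly_invariant :: "real set set \<Rightarrow> bool" where
  "linearly_invariant C \<longleftrightarrow>
     (\<forall>E\<in>C. \<forall>r::real. (\<lambda>x. x + r) ` E \<in> C \<and> (r \<noteq> 0 \<longrightarrow> (\<lambda>x. r * x) ` E \<in> C))"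

definition rare_set :: "'a set \<Rightarrow> 'a set set \<Rightarrow> 'a set \<Rightarrow> bool" where
  "rare_set X C R \<longleftrightarrow> R \<subseteq> X \<and> uncountable R \<and> (\<forall>M. meager C M \<longrightarrow> countable (R \<inter> M))"

definition Q_subspace :: "real set \<Rightarrow> bool" where
  "Q_subspace E \<longleftrightarrow> 0 \<in> E \<and> (\<forall>x\<in>E. \<forall>y\<in>E. x + y \<in> E) \<and> (\<forall>q\<in>\<rat>. \<forall>x\<in>E. q * x \<in> E)"

definition CH :: bool where
  "CH \<longleftrightarrow> (\<forall>A :: real set. countable A \<or> A \<approx> (UNIV :: real set))"

end

theory Submission
  imports Defs
begin

text \<open>
  Under CH, well-order \<open>\<real>\<close> so that all proper initial segments are countable, and enumerate
  along the same order a family of meager sets that is cofinal among all meager sets: by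
  c.c.c. every singular set misses a countable family of regions whose union has singular
  complement, so every meager set is covered by a meager set coded by a double sequence of
  regions, and there are only continuum many such codes.

  \<open>E\<close> and \<open>F\<close> are the unions of increasing chains of countable \<open>\<rat>\<close>-subspaces \<open>E\<^sub>t\<close>, \<open>F\<^sub>t\<close> with
  \<open>E\<^sub>t \<inter> F\<^sub>t = {0}\<close>. At stage \<open>t\<close> we adjoin a point \<open>a\<close> to \<open>E\<close> and \<open>t - a\<close> to \<open>F\<close>, where \<open>a\<close> is
  generic over the countable span \<open>W\<close> of what was built so far and of \<open>t\<close>: no \<open>q a + w\<close> with
  \<open>0 \<noteq> q \<in> \<rat>\<close>, \<open>w \<in> W\<close> lies in the meager sets enumerated up to \<open>t\<close>. Such \<open>a\<close> exists because
  meager sets are closed under countable unions and affine maps and \<open>\<real>\<close> is not meager. Then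
  \<open>t \<in> E + F\<close>, and the \<open>s\<close>-th enumerated meager set meets \<open>E\<close> and \<open>F\<close> only inside the
  countable stages before \<open>s\<close>.
\<close>

section \<open>Sums of \<open>\<rat>\<close>-subspaces of \<open>\<real>\<close>\<close>

definition rat_multiples :: "real \<Rightarrow> real set" where
  "rat_multiples a = (\<lambda>q. q * a) ` \<rat>"

lemma rat_multiplesI: "q \<in> \<rat> \<Longrightarrow> q * a \<in> rat_multiples a"
  unfolding rat_multiples_def by blast

lemma rat_multiplesE:
  assumes "y \<in> rat_multiples a" obtains q where "q \<in> \<rat>" "y = q * a"
  using assms unfolding rat_multiples_def by blast

lemma zero_in_rat_multiples: "0 \<in> rat_multiples a"
  using rat_multiplesI[OF Rats_0] by simp

lemma countable_rat_multiples: "countable (rat_multiples a)"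
  unfolding rat_multiples_def by (simp add: countable_rat)

lemma countable_set_plus: "countable A \<Longrightarrow> countable B \<Longrightarrow> countable (A + B)"
  unfolding set_plus_image by simp

lemma set_plus_superset:
  fixes A B :: "'a::monoid_add set"
  assumes "0 \<in> B" shows "A \<subseteq> A + B"
proof
  fix a assume "a \<in> A"
  from set_plus_intro[OF this assms] show "a \<in> A + B"
    by simp
qed

lemma Q_subspace_zero: "Q_subspace V \<Longrightarrow> 0 \<in> V"
  unfolding Q_subspace_def by blast

lemma Q_subspace_add: "Q_subspace V \<Longrightarrow> x \<in> V \<Longrightarrow> y \<in> V \<Longrightarrow> x + y \<in> V"
  unfolding Q_subspace_def by blast

lemma Q_subspace_scale: "Q_subspace V \<Longrightarrow> q \<in> \<rat> \<Longrightarrow> x \<in> V \<Longrightarrow> q * x \<in> V"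
  unfolding Q_subspace_def by blast

lemma Q_subspace_minus: "Q_subspace V \<Longrightarrow> x \<in> V \<Longrightarrow> - x \<in> V"
  using Q_subspace_scale[of V "-1" x] by simp

lemma Q_subspace_diff: "Q_subspace V \<Longrightarrow> x \<in> V \<Longrightarrow> y \<in> V \<Longrightarrow> x - y \<in> V"
  using Q_subspace_add Q_subspace_minus by fastforce

lemma Q_subspace_scale_cancel:
  assumes "Q_subspace V" "q \<in> \<rat>" "q \<noteq> 0" "q * x \<in> V"
  shows "x \<in> V"
  using Q_subspace_scale[OF assms(1) _ assms(4), of "1 / q"] assms(2,3) by simp

lemma Q_subspace_set_plus:
  assumes "Q_subspace V" "Q_subspace U"
  shows "Q_subspace (V + U)"
  unfolding Q_subspace_def
proof (intro conjI ballI)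
  show "0 \<in> V + U"
    using set_plus_intro[OF Q_subspace_zero Q_subspace_zero, OF assms] by simp
next
  fix x y assume "x \<in> V + U" "y \<in> V + U"
  then obtain v u v' u' where "v \<in> V" "u \<in> U" "v' \<in> V" "u' \<in> U" "x = v + u" "y = v' + u'"
    by (elim set_plus_elim)
  then have "x + y = (v + v') + (u + u')" "v + v' \<in> V" "u + u' \<in> U"
    using assms by (simp_all add: Q_subspace_add)
  then show "x + y \<in> V + U"
    by (simp add: set_plus_intro)
next
  fix q :: real and x assume "q \<in> \<rat>" "x \<in> V + U"
  then obtain v u where "v \<in> V" "u \<in> U" "x = v + u"
    by (elim set_plus_elim)
  then have "q * x = q * v + q * u" "q * v \<in> V" "q * u \<in> U"
    using assms \<open>q \<in> \<rat>\<close> by (simp_all add: distrib_left Q_subspace_scale)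
  then show "q * x \<in> V + U"
    by (simp add: set_plus_intro)
qed

lemma Q_subspace_rat_multiples: "Q_subspace (rat_multiples a)"
  unfolding Q_subspace_def
proof (intro conjI ballI)
  fix x y assume "x \<in> rat_multiples a" "y \<in> rat_multiples a"
  then obtain p q where "p \<in> \<rat>" "q \<in> \<rat>" "x = p * a" "y = q * a"
    by (elim rat_multiplesE)
  then show "x + y \<in> rat_multiples a"
    using rat_multiplesI[of "p + q" a] by (simp add: distrib_right)
next
  fix r :: real and x assume "r \<in> \<rat>" "x \<in> rat_multiples a"
  then obtain q where "q \<in> \<rat>" "x = q * a"
    by (elim rat_multiplesE)
  then show "r * x \<in> rat_multiples a"
    using \<open>r \<in> \<rat>\<close> rat_multiplesI[of "r * q" a] by (simp add: mult.assoc)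
qed (rule zero_in_rat_multiples)

lemma set_plus_rat_multiplesE:
  assumes "y \<in> V + rat_multiples b"
  obtains v q where "v \<in> V" "q \<in> \<rat>" "y = v + q * b"
  using assms by (elim set_plus_elim rat_multiplesE) blast

lemma set_plus_rat_multiples_new_point:
  assumes "y \<in> V + rat_multiples b" "y \<notin> V"
  obtains v q where "v \<in> V" "q \<in> \<rat>" "q \<noteq> 0" "y = v + q * b"
proof -
  obtain v q where "v \<in> V" "q \<in> \<rat>" "y = v + q * b"
    using assms(1) by (rule set_plus_rat_multiplesE)
  with assms(2) that show thesis
    by (cases "q = 0") auto
qed

lemma rat_multiples_extensions_disjoint:
  assumes V: "Q_subspace V" and U: "Q_subspace U" and VU: "V \<inter> U = {0}"
    and x: "x \<notin> V + U" and a: "a \<notin> V + U + rat_multiples x"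
  shows "(V + rat_multiples a) \<inter> (U + rat_multiples (x - a)) = {0}"
proof -
  have VU_sub: "Q_subspace (V + U)"
    using V U by (rule Q_subspace_set_plus)
  have W: "Q_subspace (V + U + rat_multiples x)"
    using VU_sub Q_subspace_rat_multiples by (rule Q_subspace_set_plus)
  have "y = 0" if yV: "y \<in> V + rat_multiples a" and yU: "y \<in> U + rat_multiples (x - a)" for y
  proof -
    obtain v p u q where "v \<in> V" "p \<in> \<rat>" "u \<in> U" "q \<in> \<rat>"
      and y: "y = v + p * a" "y = u + q * (x - a)"
      using set_plus_rat_multiplesE[OF yV] set_plus_rat_multiplesE[OF yU] by metis
    have "(p + q) * a = (- v + u) + q * x"
      using y by (simp add: algebra_simps)
    moreover have "(- v + u) + q * x \<in> V + U + rat_multiples x"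
      using \<open>v \<in> V\<close> \<open>u \<in> U\<close> \<open>q \<in> \<rat>\<close> V
      by (intro set_plus_intro rat_multiplesI) (simp_all add: Q_subspace_minus)
    ultimately have "p + q = 0"
      using Q_subspace_scale_cancel[OF W, of "p + q" a] a \<open>p \<in> \<rat>\<close> \<open>q \<in> \<rat>\<close> by auto
    then have "q * x = v + - u"
      using y by (simp add: algebra_simps eq_neg_iff_add_eq_0[symmetric])
    moreover have "v + - u \<in> V + U"
      using \<open>v \<in> V\<close> \<open>u \<in> U\<close> U by (intro set_plus_intro) (simp_all add: Q_subspace_minus)
    ultimately have "q = 0"
      using Q_subspace_scale_cancel[OF VU_sub, of q x] x \<open>q \<in> \<rat>\<close> by auto
    then show "y = 0"
      using \<open>p + q = 0\<close> y \<open>v \<in> V\<close> \<open>u \<in> U\<close> VU by auto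
  qed
  moreover have "0 \<in> V + rat_multiples a" "0 \<in> U + rat_multiples (x - a)"
    using V U by (simp_all add: Q_subspace_zero Q_subspace_set_plus Q_subspace_rat_multiples)
  ultimately show ?thesis
    by blast
qed

section \<open>One step of the construction\<close>

definition admissible_pair :: "real set \<Rightarrow> real set \<Rightarrow> bool" where
  "admissible_pair E F \<longleftrightarrow> Q_subspace E \<and> Q_subspace F \<and> countable E \<and> countable F \<and> E \<inter> F = {0}"

definition avoiding_extension ::
    "real set \<Rightarrow> real set \<Rightarrow> real set \<Rightarrow> real \<Rightarrow> real set \<Rightarrow> real set \<Rightarrow> bool" where
  "avoiding_extension E0 F0 M x E1 F1 \<longleftrightarrow>
     admissible_pair E1 F1 \<and> E0 \<subset> E1 \<and> F0 \<subset> F1 \<and> x \<in> E1 + F1 \<and>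
     (E1 - E0) \<inter> M = {} \<and> (F1 - F0) \<inter> M = {}"

lemma self_in_set_plus_rat_multiples: "Q_subspace V \<Longrightarrow> b \<in> V + rat_multiples b"
  using set_plus_intro[OF Q_subspace_zero rat_multiplesI[OF Rats_1, of b]] by simp

lemma psubset_set_plus_rat_multiples: "Q_subspace V \<Longrightarrow> b \<notin> V \<Longrightarrow> V \<subset> V + rat_multiples b"
  using self_in_set_plus_rat_multiples set_plus_superset[OF zero_in_rat_multiples] by blast

lemma set_plus_rat_multiples_new_points_avoid:
  assumes W: "Q_subspace W" "V \<subseteq> W" "u \<in> W" and c: "c \<in> \<rat>" "c \<noteq> 0"
    and avoid: "\<And>q w. q \<in> \<rat> \<Longrightarrow> q \<noteq> 0 \<Longrightarrow> w \<in> W \<Longrightarrow> q * a + w \<notin> M"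
  shows "(V + rat_multiples (u + c * a) - V) \<inter> M = {}"
proof -
  have "y \<notin> M" if new: "y \<in> V + rat_multiples (u + c * a)" "y \<notin> V" for y
  proof -
    obtain v q where "v \<in> V" "q \<in> \<rat>" "q \<noteq> 0" "y = v + q * (u + c * a)"
      using new by (rule set_plus_rat_multiples_new_point)
    moreover have "v + q * u \<in> W"
      using W calculation by (blast intro: Q_subspace_add Q_subspace_scale)
    moreover have "y = (q * c) * a + (v + q * u)"
      using calculation by (simp add: algebra_simps)
    ultimately show ?thesis
      using avoid[of "q * c" "v + q * u"] c by simp
  qed
  then show ?thesis
    by blast
qed

lemma avoiding_extension_rat_multiples:
  assumes EF: "admissible_pair E0 F0" and x: "x \<notin> E0 + F0"
    and a: "a \<notin> E0 + F0 + rat_multiples x"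
    and avoid: "\<And>q w. q \<in> \<rat> \<Longrightarrow> q \<noteq> 0 \<Longrightarrow> w \<in> E0 + F0 + rat_multiples x \<Longrightarrow> q * a + w \<notin> M"
  shows "avoiding_extension E0 F0 M x (E0 + rat_multiples a) (F0 + rat_multiples (x - a))"
proof -
  let ?W = "E0 + F0 + rat_multiples x"
  have E0: "Q_subspace E0" "countable E0" and F0: "Q_subspace F0" "countable F0"
    using EF unfolding admissible_pair_def by simp_all
  have W: "Q_subspace ?W"
    using E0 F0 by (intro Q_subspace_set_plus Q_subspace_rat_multiples)
  have "E0 \<subseteq> ?W" "F0 \<subseteq> ?W"
    using set_plus_superset[OF Q_subspace_zero[OF F0(1)], of E0] set_zero_plus2[OF Q_subspace_zero[OF E0(1)], of F0]
      set_plus_superset[OF zero_in_rat_multiples, of "E0 + F0" x] by blast+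
  have "x \<in> ?W"
    using self_in_set_plus_rat_multiples[OF Q_subspace_set_plus[OF E0(1) F0(1)]] .
  have "a \<notin> E0"
    using a \<open>E0 \<subseteq> ?W\<close> by blast
  have "x - a \<notin> F0"
  proof
    assume "x - a \<in> F0"
    then have "x - (x - a) \<in> ?W"
      using W \<open>F0 \<subseteq> ?W\<close> \<open>x \<in> ?W\<close> by (blast intro: Q_subspace_diff)
    then show False
      using a by simp
  qed
  have "x \<in> (E0 + rat_multiples a) + (F0 + rat_multiples (x - a))"
    using set_plus_intro[OF self_in_set_plus_rat_multiples[OF E0(1)] self_in_set_plus_rat_multiples[OF F0(1)],
        of a "x - a"]
    by simp
  moreover have "(E0 + rat_multiples a - E0) \<inter> M = {}"
    using set_plus_rat_multiples_new_points_avoid[OF W \<open>E0 \<subseteq> ?W\<close> Q_subspace_zero[OF W] Rats_1 _ avoid]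
    by simp
  moreover have "(F0 + rat_multiples (x - a) - F0) \<inter> M = {}"
    using set_plus_rat_multiples_new_points_avoid[OF W \<open>F0 \<subseteq> ?W\<close> \<open>x \<in> ?W\<close>, of "- 1"] avoid
    by simp
  moreover have "admissible_pair (E0 + rat_multiples a) (F0 + rat_multiples (x - a))"
    using E0 F0 EF x a rat_multiples_extensions_disjoint unfolding admissible_pair_def
    by (simp add: Q_subspace_set_plus Q_subspace_rat_multiples countable_set_plus countable_rat_multiples)
  moreover have "E0 \<subset> E0 + rat_multiples a" "F0 \<subset> F0 + rat_multiples (x - a)"
    using psubset_set_plus_rat_multiples E0(1) F0(1) \<open>a \<notin> E0\<close> \<open>x - a \<notin> F0\<close> by blast+
  ultimately show ?thesis
    unfolding avoiding_extension_def by blast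
qed

lemma Q_subspace_UN_chain:
  assumes sub: "\<And>i. i \<in> I \<Longrightarrow> Q_subspace (E i)"
    and chain: "\<And>i j. i \<in> I \<Longrightarrow> j \<in> I \<Longrightarrow> E i \<subseteq> E j \<or> E j \<subseteq> E i"
  shows "Q_subspace (insert 0 (\<Union>i\<in>I. E i))"
  unfolding Q_subspace_def
proof (intro conjI ballI)
  fix x y assume x: "x \<in> insert 0 (\<Union>i\<in>I. E i)" and y: "y \<in> insert 0 (\<Union>i\<in>I. E i)"
  show "x + y \<in> insert 0 (\<Union>i\<in>I. E i)"
  proof (cases "x = 0 \<or> y = 0")
    case False
    then obtain i j where "i \<in> I" "j \<in> I" "x \<in> E i" "y \<in> E j"
      using x y by blast
    then obtain k where "k \<in> I" "x \<in> E k" "y \<in> E k"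
      using chain by blast
    then show ?thesis
      using sub Q_subspace_add by blast
  qed (use x y in auto)
next
  fix q :: real and x assume "q \<in> \<rat>" and x: "x \<in> insert 0 (\<Union>i\<in>I. E i)"
  show "q * x \<in> insert 0 (\<Union>i\<in>I. E i)"
  proof (cases "x = 0")
    case False
    then obtain i where "i \<in> I" "x \<in> E i"
      using x by blast
    then show ?thesis
      using sub Q_subspace_scale[OF _ \<open>q \<in> \<rat>\<close>] by blast
  qed simp
qed simp

lemma UN_chain_Int_eq_zero:
  assumes chain: "\<And>i j. i \<in> I \<Longrightarrow> j \<in> I \<Longrightarrow> (E i \<subseteq> E j \<and> F i \<subseteq> F j) \<or> (E j \<subseteq> E i \<and> F j \<subseteq> F i)"
    and disj: "\<And>i. i \<in> I \<Longrightarrow> E i \<inter> F i = {0}"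
  shows "insert 0 (\<Union>i\<in>I. E i) \<inter> insert 0 (\<Union>i\<in>I. F i) = {0}"
proof -
  have "x = 0" if "i \<in> I" "j \<in> I" "x \<in> E i" "x \<in> F j" for i j x
    using chain[OF that(1,2)] disj[OF that(1)] disj[OF that(2)] that(3,4) by blast
  then show ?thesis
    by blast
qed

lemma admissible_pair_UN_chain:
  assumes "countable I" and adm: "\<And>i. i \<in> I \<Longrightarrow> admissible_pair (E i) (F i)"
    and chain: "\<And>i j. i \<in> I \<Longrightarrow> j \<in> I \<Longrightarrow> (E i \<subseteq> E j \<and> F i \<subseteq> F j) \<or> (E j \<subseteq> E i \<and> F j \<subseteq> F i)"
  shows "admissible_pair (insert 0 (\<Union>i\<in>I. E i)) (insert 0 (\<Union>i\<in>I. F i))"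
proof -
  have "Q_subspace (insert 0 (\<Union>i\<in>I. E i))" "Q_subspace (insert 0 (\<Union>i\<in>I. F i))"
    using adm chain unfolding admissible_pair_def by (metis Q_subspace_UN_chain)+
  moreover have "insert 0 (\<Union>i\<in>I. E i) \<inter> insert 0 (\<Union>i\<in>I. F i) = {0}"
    using adm chain unfolding admissible_pair_def by (intro UN_chain_Int_eq_zero) blast+
  ultimately show ?thesis
    using adm \<open>countable I\<close> unfolding admissible_pair_def by auto
qed

locale small_sets =
  fixes small :: "real set \<Rightarrow> bool"
  assumes small_Union: "countable \<A> \<Longrightarrow> (\<And>A. A \<in> \<A> \<Longrightarrow> small A) \<Longrightarrow> small (\<Union>\<A>)"
    and small_countable: "countable A \<Longrightarrow> small A"
    and small_affine_preimage: "small M \<Longrightarrow> c \<noteq> 0 \<Longrightarrow> small {y. c * y + d \<in> M}"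
    and not_small_UNIV: "\<not> small UNIV"
begin

definition rare :: "real set \<Rightarrow> bool" where
  "rare E \<longleftrightarrow> uncountable E \<and> (\<forall>M. small M \<longrightarrow> countable (E \<inter> M))"

lemma ex_generic_point:
  assumes "countable W" "small M"
  obtains a where "a \<notin> W" "\<And>q w. q \<in> \<rat> \<Longrightarrow> q \<noteq> 0 \<Longrightarrow> w \<in> W \<Longrightarrow> q * a + w \<notin> M"
proof -
  let ?bad = "\<Union>(insert W ((\<lambda>(q, w). {y. q * y + w \<in> M}) ` ((\<rat> - {0}) \<times> W)))"
  have "small ?bad"
    using assms by (intro small_Union) (auto intro: small_countable small_affine_preimage simp: countable_rat)
  then have "?bad \<noteq> UNIV"
    using not_small_UNIV by metis
  then obtain a where a: "a \<notin> ?bad"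
    by blast
  show thesis
  proof (rule that)
    show "a \<notin> W"
      using a by blast
    show "q * a + w \<notin> M" if "q \<in> \<rat>" "q \<noteq> 0" "w \<in> W" for q w
      using a that by blast
  qed
qed

lemma ex_avoiding_extension:
  assumes "admissible_pair E0 F0" "small M"
  obtains E1 F1 where "avoiding_extension E0 F0 M x E1 F1"
proof -
  have "countable (E0 + F0)"
    using assms(1) unfolding admissible_pair_def by (simp add: countable_set_plus)
  \<comment> \<open>If \<open>x\<close> is already covered, extend towards some uncovered \<open>x'\<close> instead.\<close>
  obtain x' where x': "x' \<notin> E0 + F0" "x \<in> E0 + F0 \<or> x' = x"
  proof (cases "x \<in> E0 + F0")
    case True
    obtain x' where "x' \<notin> E0 + F0"
      using \<open>countable (E0 + F0)\<close> uncountable_UNIV_real by (metis UNIV_eq_I)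
    with True that show ?thesis
      by blast
  qed (use that in blast)
  have "countable (E0 + F0 + rat_multiples x')"
    using \<open>countable (E0 + F0)\<close> by (simp add: countable_set_plus countable_rat_multiples)
  then obtain a where "a \<notin> E0 + F0 + rat_multiples x'"
    and "\<And>q w. q \<in> \<rat> \<Longrightarrow> q \<noteq> 0 \<Longrightarrow> w \<in> E0 + F0 + rat_multiples x' \<Longrightarrow> q * a + w \<notin> M"
    using assms(2) by (rule ex_generic_point) blast
  then have ext: "avoiding_extension E0 F0 M x' (E0 + rat_multiples a) (F0 + rat_multiples (x' - a))"
    using assms(1) x'(1) by (intro avoiding_extension_rat_multiples)
  then have "E0 + F0 \<subseteq> (E0 + rat_multiples a) + (F0 + rat_multiples (x' - a))"
    unfolding avoiding_extension_def by (intro set_plus_mono2) auto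
  then have "x \<in> (E0 + rat_multiples a) + (F0 + rat_multiples (x' - a))"
    using x'(2) ext unfolding avoiding_extension_def by blast
  with ext show thesis
    using that unfolding avoiding_extension_def by blast
qed

end

section \<open>The transfinite construction\<close>

lemma well_order_underS_total:
  assumes "well_order_on UNIV W" "s \<noteq> t"
  shows "s \<in> underS W t \<or> t \<in> underS W s"
  using assms unfolding well_order_on_def linear_order_on_def partial_order_on_def total_on_def underS_def
  by blast

lemma wf_well_order_strict: "well_order_on UNIV W \<Longrightarrow> wf (W - Id)"
  unfolding well_order_on_def by blast

lemma uncountable_UN_new_elements:
  fixes X :: "'i \<Rightarrow> 'b set"
  assumes wo: "well_order_on UNIV W" and "uncountable (UNIV :: 'i set)"
    and new: "\<And>t. \<not> X t \<subseteq> (\<Union>s\<in>underS W t. X s)"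
  shows "uncountable (\<Union>t. X t)"
proof
  assume "countable (\<Union>t. X t)"
  have "\<exists>y. y \<in> X t \<and> y \<notin> (\<Union>s\<in>underS W t. X s)" for t
    using new[of t] by blast
  then obtain x where x: "\<And>t. x t \<in> X t \<and> x t \<notin> (\<Union>s\<in>underS W t. X s)"
    by metis
  have "inj x"
  proof (rule injI, rule ccontr)
    fix s t assume "x s = x t" "s \<noteq> t"
    then show False
      using well_order_underS_total[OF wo \<open>s \<noteq> t\<close>] x[of s] x[of t] by auto
  qed
  moreover have "range x \<subseteq> (\<Union>t. X t)"
    using x by blast
  ultimately have "countable (UNIV :: 'i set)"
    using \<open>countable (\<Union>t. X t)\<close> by (metis countable_image_inj_on countable_subset)
  with assms(2) show False
    by blast
qed

lemma UN_Int_subset_underS: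
  fixes X :: "'i \<Rightarrow> 'b set"
  assumes wo: "well_order_on UNIV W"
    and later: "\<And>t. (s, t) \<in> W \<Longrightarrow> X t \<inter> M \<subseteq> Z \<union> (\<Union>u\<in>underS W t. X u)"
  shows "(\<Union>t. X t) \<inter> M \<subseteq> Z \<union> (\<Union>u\<in>underS W s. X u)"
proof
  fix y assume y: "y \<in> (\<Union>t. X t) \<inter> M"
  then obtain t0 where "t0 \<in> {t. y \<in> X t}"
    by blast
  then obtain t where "t \<in> {t. y \<in> X t}" and first: "\<And>u. (u, t) \<in> W - Id \<Longrightarrow> u \<notin> {t. y \<in> X t}"
    by (rule wfE_min[OF wf_well_order_strict[OF wo]]) blast
  then have "y \<in> X t" "y \<notin> (\<Union>u\<in>underS W t. X u)"
    unfolding underS_def by auto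
  show "y \<in> Z \<union> (\<Union>u\<in>underS W s. X u)"
  proof (cases "(s, t) \<in> W")
    case True
    then show ?thesis
      using later[OF True] y \<open>y \<in> X t\<close> \<open>y \<notin> (\<Union>u\<in>underS W t. X u)\<close> by blast
  next
    case False
    then have "t \<in> underS W s"
      using well_order_underS_total[OF wo, of s t] wo
      unfolding well_order_on_def linear_order_on_def partial_order_on_def preorder_on_def refl_on_def
      by (auto simp: underS_def)
    then show ?thesis
      using \<open>y \<in> X t\<close> by blast
  qed
qed

text \<open>The cardinal well-order of \<open>\<real>\<close>: its proper initial segments have smaller cardinality,
  hence are countable by CH.\<close>

lemma CH_imp_well_order_countable_underS:
  assumes "CH"
  shows "\<exists>W :: real rel. well_order_on UNIV W \<and> (\<forall>t. countable (underS W t))"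
proof (intro exI conjI allI)
  let ?W = "card_of (UNIV :: real set)"
  show "well_order_on UNIV ?W"
    using card_of_card_order_on[of "UNIV :: real set"] unfolding card_order_on_def by blast
  show "countable (underS ?W t)" for t
  proof (rule ccontr)
    assume "uncountable (underS ?W t)"
    then have "ordIso2 (card_of (underS ?W t)) ?W"
      using assms eqpoll_iff_card_of_ordIso unfolding CH_def by blast
    moreover have "(card_of (underS ?W t), ?W) \<in> ordLess"
      by (rule card_of_underS[OF card_of_Card_order]) (simp add: Field_card_of)
    ultimately show False
      using not_ordLess_ordIso by blast
  qed
qed

locale small_sets_enumeration = small_sets +
  fixes W :: "real rel" and enum :: "real \<Rightarrow> real set"
  assumes well_order: "well_order_on UNIV W"
    and countable_underS: "countable (underS W t)"
    and small_enum: "small (enum t)"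
    and enum_cofinal: "small M \<Longrightarrow> \<exists>t. M \<subseteq> enum t"
begin

definition barrier :: "real \<Rightarrow> real set" where
  "barrier t = \<Union>(enum ` insert t (underS W t))"

text \<open>The \<open>insert 0\<close> makes \<open>before X t\<close> a subspace also at the least element of \<open>W\<close>.\<close>

definition before :: "(real \<Rightarrow> real set) \<Rightarrow> real \<Rightarrow> real set" where
  "before X t = insert 0 (\<Union>s\<in>underS W t. X s)"

definition next_pair :: "real set \<Rightarrow> real set \<Rightarrow> real set \<Rightarrow> real \<Rightarrow> real set \<times> real set" where
  "next_pair E0 F0 M x = (SOME p. avoiding_extension E0 F0 M x (fst p) (snd p))"

definition stage :: "real \<Rightarrow> real set \<times> real set" where
  "stage = wfrec (W - Id) (\<lambda>f t. next_pair (before (fst \<circ> f) t) (before (snd \<circ> f) t) (barrier t) t)"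

definition E_stage :: "real \<Rightarrow> real set" where
  "E_stage = fst \<circ> stage"

definition F_stage :: "real \<Rightarrow> real set" where
  "F_stage = snd \<circ> stage"

lemma small_barrier: "small (barrier t)"
  unfolding barrier_def using countable_underS small_enum by (intro small_Union) auto

lemma enum_subset_barrier: "(s, t) \<in> W \<Longrightarrow> enum s \<subseteq> barrier t"
  unfolding barrier_def underS_def by blast

lemma subset_before: "s \<in> underS W t \<Longrightarrow> X s \<subseteq> before X t"
  unfolding before_def by blast

lemma next_pair_avoiding:
  assumes "admissible_pair E0 F0" "small M"
  shows "avoiding_extension E0 F0 M x (fst (next_pair E0 F0 M x)) (snd (next_pair E0 F0 M x))"
proof -
  obtain E1 F1 where "avoiding_extension E0 F0 M x E1 F1"
    using assms by (rule ex_avoiding_extension)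
  then have "avoiding_extension E0 F0 M x (fst (E1, F1)) (snd (E1, F1))"
    by simp
  then show ?thesis
    unfolding next_pair_def by (rule someI)
qed

lemma stage_eq: "stage t = next_pair (before E_stage t) (before F_stage t) (barrier t) t"
proof -
  have "adm_wf (W - Id) (\<lambda>f t. next_pair (before (fst \<circ> f) t) (before (snd \<circ> f) t) (barrier t) t)"
    unfolding adm_wf_def before_def underS_def by (auto intro!: arg_cong2[where f = "\<lambda>A B. next_pair A B _ _"])
  from wfrec_fixpoint[OF wf_well_order_strict[OF well_order] this] show ?thesis
    unfolding E_stage_def F_stage_def stage_def[symmetric] by (metis)
qed

lemma before_chain:
  assumes "\<And>s. s \<in> I \<Longrightarrow> before X s \<subseteq> X s \<and> before Y s \<subseteq> Y s" "i \<in> I" "j \<in> I"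
  shows "(X i \<subseteq> X j \<and> Y i \<subseteq> Y j) \<or> (X j \<subseteq> X i \<and> Y j \<subseteq> Y i)"
proof (cases "i = j")
  case False
  then show ?thesis
    using well_order_underS_total[OF well_order False] subset_before assms by blast
qed simp

lemma stage_invariant:
  "admissible_pair (before E_stage t) (before F_stage t) \<and>
   avoiding_extension (before E_stage t) (before F_stage t) (barrier t) t (E_stage t) (F_stage t)"
  using wf_well_order_strict[OF well_order]
proof (induction t rule: wf_induct_rule)
  case (less t)
  have IH: "admissible_pair (E_stage s) (F_stage s) \<and> before E_stage s \<subseteq> E_stage s \<and> before F_stage s \<subseteq> F_stage s"
    if "s \<in> underS W t" for s
    using less[of s] that unfolding underS_def avoiding_extension_def by auto
  have chain: "(E_stage i \<subseteq> E_stage j \<and> F_stage i \<subseteq> F_stage j) \<or> (E_stage j \<subseteq> E_stage i \<and> F_stage j \<subseteq> F_stage i)"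
    if "i \<in> underS W t" "j \<in> underS W t" for i j
    using IH that by (intro before_chain[of "underS W t"]) auto
  have adm: "admissible_pair (before E_stage t) (before F_stage t)"
    unfolding before_def
    by (rule admissible_pair_UN_chain[OF countable_underS]) (use IH chain in auto)
  let ?p = "next_pair (before E_stage t) (before F_stage t) (barrier t) t"
  have "E_stage t = fst ?p" "F_stage t = snd ?p"
    using stage_eq[of t] by (simp_all add: E_stage_def F_stage_def)
  then show ?case
    using adm next_pair_avoiding[OF adm small_barrier, of t t] by simp
qed

lemma rare_UN_stages:
  assumes grow: "\<And>t. before X t \<subset> X t" and cnt: "\<And>t. countable (X t)"
    and avoid: "\<And>t. (X t - before X t) \<inter> barrier t = {}"
  shows "rare (\<Union>t. X t)"
  unfolding rare_def
proof (intro conjI allI impI)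
  show "uncountable (\<Union>t. X t)"
    using grow unfolding before_def
    by (intro uncountable_UN_new_elements[OF well_order uncountable_UNIV_real]) blast
  fix M assume "small M"
  then obtain s where "M \<subseteq> enum s"
    using enum_cofinal by blast
  have "X t \<inter> enum s \<subseteq> {0} \<union> (\<Union>u\<in>underS W t. X u)" if "(s, t) \<in> W" for t
    using avoid[of t] enum_subset_barrier[OF that] unfolding before_def by blast
  then have "(\<Union>t. X t) \<inter> enum s \<subseteq> before X s"
    unfolding before_def using UN_Int_subset_underS[OF well_order] by (metis insert_is_Un)
  then show "countable ((\<Union>t. X t) \<inter> M)"
    using \<open>M \<subseteq> enum s\<close> grow[of s] cnt[of s] by (meson countable_subset inf_mono order_refl psubset_imp_subset)
qed

lemma ex_rare_complementary_subspaces: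
  "\<exists>E F. rare E \<and> rare F \<and> Q_subspace E \<and> Q_subspace F \<and> E + F = UNIV \<and> E \<inter> F = {0}"
proof (intro exI conjI)
  have inv: "admissible_pair (E_stage t) (F_stage t)" "before E_stage t \<subset> E_stage t"
    "before F_stage t \<subset> F_stage t" "t \<in> E_stage t + F_stage t"
    "(E_stage t - before E_stage t) \<inter> barrier t = {}" "(F_stage t - before F_stage t) \<inter> barrier t = {}" for t
    using stage_invariant[of t] unfolding avoiding_extension_def by auto
  show "rare (\<Union>t. E_stage t)" "rare (\<Union>t. F_stage t)"
    by (rule rare_UN_stages; use inv in \<open>simp add: admissible_pair_def\<close>)+
  have chain: "(E_stage i \<subseteq> E_stage j \<and> F_stage i \<subseteq> F_stage j) \<or> (E_stage j \<subseteq> E_stage i \<and> F_stage j \<subseteq> F_stage i)" for i j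
    using inv(2,3) psubset_imp_subset by (intro before_chain[of UNIV]) blast+
  have zero: "insert 0 (\<Union>t. E_stage t) = (\<Union>t. E_stage t)" "insert 0 (\<Union>t. F_stage t) = (\<Union>t. F_stage t)"
    using inv(1)[of 0] unfolding admissible_pair_def by (auto dest: Q_subspace_zero)
  have subspaces: "Q_subspace (E_stage t)" "Q_subspace (F_stage t)" for t
    using inv(1) unfolding admissible_pair_def by auto
  have "Q_subspace (insert 0 (\<Union>t. E_stage t))" "Q_subspace (insert 0 (\<Union>t. F_stage t))"
    by (rule Q_subspace_UN_chain; use subspaces chain in blast)+
  then show "Q_subspace (\<Union>t. E_stage t)" "Q_subspace (\<Union>t. F_stage t)"
    by (simp_all only: zero)
  show "(\<Union>t. E_stage t) \<inter> (\<Union>t. F_stage t) = {0}"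
    using UN_chain_Int_eq_zero[of UNIV E_stage F_stage] inv(1) chain zero
    unfolding admissible_pair_def by auto
  have "t \<in> (\<Union>t. E_stage t) + (\<Union>t. F_stage t)" for t
    using inv(4)[of t] set_plus_mono2[of "E_stage t" "\<Union>t. E_stage t" "F_stage t" "\<Union>t. F_stage t"] by blast
  then show "(\<Union>t. E_stage t) + (\<Union>t. F_stage t) = UNIV"
    by blast
qed

end

lemma (in small_sets) ex_rare_complementary_subspaces_CH:
  fixes enum :: "real \<Rightarrow> real set"
  assumes "CH" "\<And>t. small (enum t)" "\<And>M. small M \<Longrightarrow> \<exists>t. M \<subseteq> enum t"
  shows "\<exists>E F. rare E \<and> rare F \<and> Q_subspace E \<and> Q_subspace F \<and> E + F = UNIV \<and> E \<inter> F = {0}"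
proof -
  obtain W :: "real rel" where "well_order_on UNIV W" "\<forall>t. countable (underS W t)"
    using CH_imp_well_order_countable_underS[OF assms(1)] by blast
  then interpret small_sets_enumeration small W enum
    using assms(2,3) by unfold_locales auto
  show ?thesis
    by (rule ex_rare_complementary_subspaces)
qed

section \<open>Meager sets of a category base\<close>

lemma singular_empty: "singular C {}"
  unfolding singular_def by blast

lemma meager_empty: "meager C {}"
  unfolding meager_def by (intro exI[of _ "{}"]) simp

lemma meager_Union:
  assumes "countable \<M>" "\<And>M. M \<in> \<M> \<Longrightarrow> meager C M"
  shows "meager C (\<Union>\<M>)"
proof -
  obtain F where F: "\<And>M. M \<in> \<M> \<Longrightarrow> countable (F M) \<and> (\<forall>S\<in>F M. singular C S) \<and> \<Union>(F M) = M"
    using assms(2) unfolding meager_def by metis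
  have "\<Union>\<M> = \<Union>(\<Union>M\<in>\<M>. F M)"
  proof (intro equalityI subsetI)
    fix x assume "x \<in> \<Union>\<M>"
    then obtain M where "M \<in> \<M>" "x \<in> \<Union>(F M)"
      using F by blast
    then show "x \<in> \<Union>(\<Union>M\<in>\<M>. F M)"
      by blast
  next
    fix x assume "x \<in> \<Union>(\<Union>M\<in>\<M>. F M)"
    then obtain M where "M \<in> \<M>" "x \<in> \<Union>(F M)"
      by blast
    then show "x \<in> \<Union>\<M>"
      using F by blast
  qed
  moreover have "countable (\<Union>M\<in>\<M>. F M)" "\<forall>S\<in>(\<Union>M\<in>\<M>. F M). singular C S"
    using assms(1) F by auto
  ultimately show ?thesis
    unfolding meager_def by blast
qed

lemma meager_countable:
  assumes "point_meager X C" "countable A" "A \<subseteq> X"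
  shows "meager C A"
proof -
  have "meager C (\<Union>x\<in>A. {x})"
    using assms unfolding point_meager_def by (intro meager_Union) auto
  then show ?thesis
    by simp
qed

lemma singular_image:
  assumes "inj f" "\<And>x. f (g x) = x" "\<And>E. E \<in> C \<Longrightarrow> f ` E \<in> C" "\<And>E. E \<in> C \<Longrightarrow> g ` E \<in> C"
    and "singular C S"
  shows "singular C (f ` S)"
  unfolding singular_def
proof (intro allI impI)
  fix A assume "region C A"
  then have "region C (g ` A)"
    using assms(4) unfolding region_def by blast
  then obtain B where B: "region C B" "B \<subseteq> g ` A" "B \<inter> S = {}"
    using assms(5) unfolding singular_def by blast
  have "region C (f ` B)"
    using B(1) assms(3) unfolding region_def by blast
  moreover have "f ` B \<subseteq> A"
    using B(2) assms(2) by (auto simp: image_subset_iff)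
  moreover have "f ` B \<inter> f ` S = {}"
    using B(3) assms(1) by (simp add: image_Int[symmetric])
  ultimately show "\<exists>B'. region C B' \<and> B' \<subseteq> A \<and> B' \<inter> f ` S = {}"
    by blast
qed

lemma meager_image:
  assumes "inj f" "\<And>x. f (g x) = x" "\<And>E. E \<in> C \<Longrightarrow> f ` E \<in> C" "\<And>E. E \<in> C \<Longrightarrow> g ` E \<in> C"
    and "meager C M"
  shows "meager C (f ` M)"
proof -
  obtain F where "countable F" "\<forall>S\<in>F. singular C S" "M = \<Union>F"
    using assms(5) unfolding meager_def by blast
  moreover have "f ` \<Union>F = \<Union>((`) f ` F)"
    by blast
  ultimately show ?thesis
    unfolding meager_def using singular_image[OF assms(1-4)] by (intro exI[of _ "(`) f ` F"]) auto
qed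

lemma linearly_invariant_affine_image:
  assumes "linearly_invariant C" "E \<in> C" "c \<noteq> 0"
  shows "(\<lambda>y. c * y + d) ` E \<in> C"
proof -
  have "(\<lambda>y. c * y + d) ` E = (\<lambda>x. x + d) ` ((\<lambda>x. c * x) ` E)"
    by (simp add: image_image)
  then show ?thesis
    using assms unfolding linearly_invariant_def by simp
qed

lemma meager_affine_preimage:
  assumes "linearly_invariant C" "meager C M" "c \<noteq> 0"
  shows "meager C {y. c * y + d \<in> M}"
proof -
  let ?f = "\<lambda>y. (1 / c) * y + (- d / c)"
  have "{y. c * y + d \<in> M} = ?f ` M"
  proof (intro equalityI subsetI)
    fix y assume "y \<in> {y. c * y + d \<in> M}"
    moreover have "y = ?f (c * y + d)"
      using assms(3) by (simp add: field_simps)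
    ultimately show "y \<in> ?f ` M"
      by blast
  qed (use assms(3) in \<open>auto simp: field_simps\<close>)
  moreover have "meager C (?f ` M)"
  proof (rule meager_image[of ?f "\<lambda>y. c * y + d"])
    show "inj ?f"
      using assms(3) by (intro injI) simp
    show "?f (c * y + d) = y" for y
      using assms(3) by (simp add: field_simps)
    show "?f ` E \<in> C" if "E \<in> C" for E
      using linearly_invariant_affine_image[OF assms(1) that, of "1 / c" "- d / c"] assms(3) by simp
    show "(\<lambda>y. c * y + d) ` E \<in> C" if "E \<in> C" for E
      using linearly_invariant_affine_image[OF assms(1) that assms(3)] .
  qed (rule assms(2))
  ultimately show ?thesis
    by simp
qed

lemma small_sets_meager:
  assumes "point_meager UNIV C" "linearly_invariant C" "abundant C UNIV"
  shows "small_sets (meager C)"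
proof
  show "meager C (\<Union>\<A>)" if "countable \<A>" "\<And>A. A \<in> \<A> \<Longrightarrow> meager C A" for \<A>
    using that by (rule meager_Union)
  show "meager C A" if "countable A" for A
    using assms(1) that by (rule meager_countable) simp
  show "meager C {y. c * y + d \<in> M}" if "meager C M" "c \<noteq> 0" for M c d
    using assms(2) that by (rule meager_affine_preimage)
  show "\<not> meager C UNIV"
    using assms(3) unfolding abundant_def .
qed

lemma ex_maximal_pairwise_disjnt:
  fixes R :: "'a set set"
  obtains D where "D \<subseteq> R" "pairwise disjnt D" "\<And>B. B \<in> R \<Longrightarrow> (\<forall>E\<in>D. disjnt B E) \<Longrightarrow> B \<in> D"
proof -
  let ?A = "{D. D \<subseteq> R \<and> pairwise disjnt D}"
  have "\<Union>\<C> \<in> ?A" if "\<C> \<in> chains ?A" for \<C>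
  proof -
    have "\<C> \<subseteq> ?A" "chain\<^sub>\<subseteq> \<C>"
      using that unfolding chains_def by auto
    then show ?thesis
      using pairwise_chain_Union[of \<C> disjnt] by blast
  qed
  then have "\<forall>\<C>\<in>chains ?A. \<Union>\<C> \<in> ?A" ..
  from Zorn_Lemma[OF this] obtain D where D: "D \<in> ?A" and max: "\<forall>X\<in>?A. D \<subseteq> X \<longrightarrow> X = D" ..
  show thesis
  proof (rule that)
    show "D \<subseteq> R" "pairwise disjnt D"
      using D by blast+
    fix B assume "B \<in> R" "\<forall>E\<in>D. disjnt B E"
    then have "insert B D \<in> ?A"
      using D by (auto simp: pairwise_insert disjnt_sym)
    then show "B \<in> D"
      using max by blast
  qed
qed

lemma category_baseD:
  assumes "category_base X C"
  shows "\<exists>A. region C A"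
    and "\<And>A D. region C A \<Longrightarrow> D \<noteq> {} \<Longrightarrow> (\<And>B. B \<in> D \<Longrightarrow> region C B) \<Longrightarrow> pairwise disjnt D \<Longrightarrow> D \<prec> C
      \<Longrightarrow> \<not> (\<exists>B. region C B \<and> B \<subseteq> A \<inter> \<Union>D) \<Longrightarrow> \<exists>B. region C B \<and> B \<subseteq> A \<and> (\<forall>E\<in>D. disjnt B E)"
proof -
  have H: "X \<noteq> {} \<and> X = \<Union>C \<and> (\<forall>A D. region C A \<and> D \<noteq> {} \<and> (\<forall>B\<in>D. region C B) \<and>
            pairwise disjnt D \<and> D \<prec> C \<longrightarrow>
        (\<not>(\<exists>B. region C B \<and> B \<subseteq> A \<inter> \<Union>D) \<longrightarrow>
            (\<exists>B. region C B \<and> B \<subseteq> A \<and> (\<forall>E\<in>D. B \<inter> E = {}))))"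
    using assms unfolding category_base_def by (elim conjE) (intro conjI allI impI; simp)
  then show "\<exists>A. region C A"
    by (auto simp: region_def)
  show "\<exists>B. region C B \<and> B \<subseteq> A \<and> (\<forall>E\<in>D. disjnt B E)"
    if "region C A" "D \<noteq> {}" "\<And>B. B \<in> D \<Longrightarrow> region C B" "pairwise disjnt D" "D \<prec> C"
      "\<not> (\<exists>B. region C B \<and> B \<subseteq> A \<inter> \<Union>D)" for A D
    using H that unfolding disjnt_def by blast
qed
lemma singular_Compl_Union_maximal_disjoint:
  assumes cb: "category_base X C" and S: "singular C S"
    and D: "D \<noteq> {}" "D \<prec> C" "\<And>B. B \<in> D \<Longrightarrow> region C B" "pairwise disjnt D"
    and maximal: "\<And>B. region C B \<Longrightarrow> B \<inter> S = {} \<Longrightarrow> \<exists>E\<in>D. \<not> disjnt B E"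
  shows "singular C (- \<Union>D)"
  unfolding singular_def
proof (intro allI impI)
  fix A assume "region C A"
  have "\<not> (\<exists>B. region C B \<and> B \<subseteq> A \<and> (\<forall>E\<in>D. disjnt B E))"
  proof
    assume "\<exists>B. region C B \<and> B \<subseteq> A \<and> (\<forall>E\<in>D. disjnt B E)"
    then obtain B where "region C B" "\<forall>E\<in>D. disjnt B E"
      by blast
    moreover obtain B' where "region C B'" "B' \<subseteq> B" "B' \<inter> S = {}"
      using S \<open>region C B\<close> unfolding singular_def by blast
    ultimately show False
      using maximal[of B'] by (meson disjnt_subset1)
  qed
  then have "\<exists>B. region C B \<and> B \<subseteq> A \<inter> \<Union>D"
    using category_baseD(2)[OF cb \<open>region C A\<close> D(1) D(3) D(4) D(2)] by blast
  then show "\<exists>B. region C B \<and> B \<subseteq> A \<and> B \<inter> - \<Union>D = {}"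
    by blast
qed

lemma ex_countable_regions_Compl_singular:
  assumes cb: "category_base X C" and "ccc C" and S: "singular C S"
  shows "\<exists>D. countable D \<and> D \<noteq> {} \<and> (\<forall>B\<in>D. region C B) \<and> S \<inter> \<Union>D = {} \<and> singular C (- \<Union>D)"
proof -
  obtain A0 where "region C A0"
    using category_baseD(1)[OF cb] by blast
  then obtain B0 where B0: "region C B0" "B0 \<inter> S = {}"
    using S unfolding singular_def by blast
  let ?R = "{B. region C B \<and> B \<inter> S = {}}"
  \<comment> \<open>The category base axiom only applies to families of fewer regions than \<open>C\<close>.\<close>
  show ?thesis
  proof (cases "countable C")
    case True
    have "countable ?R"
      by (rule countable_subset[OF _ True]) (auto simp: region_def)
    moreover have "singular C (- \<Union>?R)"
      using S unfolding singular_def by blast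
    ultimately show ?thesis
      using B0 by (intro exI[of _ ?R]) blast
  next
    case False
    obtain D where D: "D \<subseteq> ?R" "pairwise disjnt D"
      and max: "\<And>B. B \<in> ?R \<Longrightarrow> (\<forall>E\<in>D. disjnt B E) \<Longrightarrow> B \<in> D"
      by (rule ex_maximal_pairwise_disjnt[of ?R]) blast
    have maximal: "\<exists>E\<in>D. \<not> disjnt B E" if "region C B" "B \<inter> S = {}" for B
      using that max unfolding region_def disjnt_def by blast
    have "countable D"
      using \<open>ccc C\<close> D unfolding ccc_def by blast
    moreover have "D \<noteq> {}"
      using maximal[OF B0] by blast
    moreover have "D \<prec> C"
    proof -
      have "D \<lesssim> C"
        using D(1) unfolding region_def by (intro subset_imp_lepoll) blast
      moreover have "\<not> D \<approx> C"
        using \<open>countable D\<close> False countable_eqpoll eqpoll_sym by blast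
      ultimately show ?thesis
        unfolding lesspoll_def by blast
    qed
    ultimately show ?thesis
      using singular_Compl_Union_maximal_disjoint[OF cb S _ _ _ D(2) maximal] D(1)
      by (intro exI[of _ D]) blast
  qed
qed

lemma ex_region_sequence_Compl_singular:
  assumes "category_base X C" "ccc C" "singular C S"
  shows "\<exists>d :: nat \<Rightarrow> 'a set. (\<forall>k. region C (d k)) \<and> S \<inter> (\<Union>k. d k) = {} \<and> singular C (- (\<Union>k. d k))"
proof -
  obtain D where D: "countable D" "D \<noteq> {}" "\<forall>B\<in>D. region C B" "S \<inter> \<Union>D = {}" "singular C (- \<Union>D)"
    using ex_countable_regions_Compl_singular[OF assms] by blast
  then have "range (from_nat_into D) = D"
    by (simp add: range_from_nat_into)
  then show ?thesis
    using D from_nat_into[OF D(2)] by (intro exI[of _ "from_nat_into D"]) auto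
qed

lemma meager_singular_sequence:
  assumes "meager C M"
  shows "\<exists>S :: nat \<Rightarrow> 'a set. (\<forall>n. singular C (S n)) \<and> M = (\<Union>n. S n)"
proof -
  obtain F where F: "countable F" "\<forall>S\<in>F. singular C S" "M = \<Union>F"
    using assms unfolding meager_def by blast
  have "range (from_nat_into (insert {} F)) = insert {} F"
    using F(1) by (simp add: range_from_nat_into)
  moreover have "singular C (from_nat_into (insert {} F) n)" for n
    using from_nat_into[of "insert {} F" n] F(2) singular_empty[of C] by auto
  ultimately show ?thesis
    using F(3) by (intro exI[of _ "from_nat_into (insert {} F)"]) auto
qed

lemma meager_subset_Compl_regions:
  assumes cb: "category_base X C" and "ccc C" and "meager C M"
  shows "\<exists>D :: nat \<Rightarrow> nat \<Rightarrow> 'a set.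
    (\<forall>n k. region C (D n k)) \<and> M \<subseteq> (\<Union>n. - (\<Union>k. D n k)) \<and> meager C (\<Union>n. - (\<Union>k. D n k))"
proof -
  obtain S :: "nat \<Rightarrow> 'a set" where S: "\<forall>n. singular C (S n)" "M = (\<Union>n. S n)"
    using meager_singular_sequence[OF assms(3)] by blast
  then have "\<forall>n. \<exists>d :: nat \<Rightarrow> 'a set. (\<forall>k. region C (d k)) \<and> S n \<inter> (\<Union>k. d k) = {} \<and>
      singular C (- (\<Union>k. d k))"
    using ex_region_sequence_Compl_singular[OF cb \<open>ccc C\<close>] by blast
  from choice[OF this] obtain D :: "nat \<Rightarrow> nat \<Rightarrow> 'a set" where
    D: "\<forall>n. (\<forall>k. region C (D n k)) \<and> S n \<inter> (\<Union>k. D n k) = {} \<and> singular C (- (\<Union>k. D n k))" ..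
  show ?thesis
  proof (intro exI[of _ D] conjI allI)
    show "region C (D n k)" for n k
      using D by blast
    show "M \<subseteq> (\<Union>n. - (\<Union>k. D n k))"
      using S(2) D by blast
    show "meager C (\<Union>n. - (\<Union>k. D n k))"
      unfolding meager_def using D by (intro exI[of _ "range (\<lambda>n. - (\<Union>k. D n k))"]) auto
  qed
qed

lemma ex_inj_double_sequences_real: "\<exists>\<iota> :: (nat \<Rightarrow> nat \<Rightarrow> real) \<Rightarrow> real. inj \<iota>"
proof -
  obtain b :: "nat set \<Rightarrow> real" where b: "inj b"
    using nat_sets_eqpoll_reals unfolding eqpoll_def bij_betw_def by blast
  obtain b' :: "real \<Rightarrow> nat set" where b': "inj b'"
    using eqpoll_sym[OF nat_sets_eqpoll_reals] unfolding eqpoll_def bij_betw_def by blast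
  define code where "code h = {prod_encode (prod_encode (i, j), k) | i j k. k \<in> b' (h i j)}"
    for h :: "nat \<Rightarrow> nat \<Rightarrow> real"
  have code_iff: "prod_encode (prod_encode (i, j), k) \<in> code h \<longleftrightarrow> k \<in> b' (h i j)" for h i j k
    unfolding code_def by auto
  have "inj code"
  proof (rule injI, intro ext)
    fix h h' i j assume "code h = code h'"
    then have "b' (h i j) = b' (h' i j)"
      using code_iff by blast
    then show "h i j = h' i j"
      by (rule injD[OF b'])
  qed
  then show ?thesis
    using b by (blast intro: inj_compose)
qed

lemma meager_cofinal_family:
  assumes "category_base (UNIV :: real set) C" "ccc C" "C \<lesssim> (UNIV :: real set)"
  shows "\<exists>enum :: real \<Rightarrow> real set. (\<forall>t. meager C (enum t)) \<and> (\<forall>M. meager C M \<longrightarrow> (\<exists>t. M \<subseteq> enum t))"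
proof -
  obtain c :: "real set \<Rightarrow> real" where c: "inj_on c C"
    using assms(3) unfolding lepoll_def by blast
  obtain \<iota> :: "(nat \<Rightarrow> nat \<Rightarrow> real) \<Rightarrow> real" where \<iota>: "inj \<iota>"
    using ex_inj_double_sequences_real by blast
  \<comment> \<open>The covers from \<open>meager_subset_Compl_regions\<close> are coded by reals: regions via \<open>c\<close>,
    double sequences via \<open>\<iota>\<close>; codes of non-meager sets are sent to \<open>{}\<close>.\<close>
  define cover where "cover H = (\<Union>n. - (\<Union>k. inv_into C c (H n k)))" for H :: "nat \<Rightarrow> nat \<Rightarrow> real"
  define enum where "enum t = (if meager C (cover (inv \<iota> t)) then cover (inv \<iota> t) else {})" for t
  show ?thesis
  proof (intro exI[of _ enum] conjI allI impI)
    show "meager C (enum t)" for t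
      unfolding enum_def by (simp add: meager_empty)
    fix M assume "meager C M"
    then obtain D :: "nat \<Rightarrow> nat \<Rightarrow> real set" where D: "\<forall>n k. region C (D n k)"
      "M \<subseteq> (\<Union>n. - (\<Union>k. D n k))" "meager C (\<Union>n. - (\<Union>k. D n k))"
      using meager_subset_Compl_regions[OF assms(1,2)] by blast
    have "cover (\<lambda>n k. c (D n k)) = (\<Union>n. - (\<Union>k. D n k))"
      unfolding cover_def using D(1) c by (simp add: region_def)
    then have "enum (\<iota> (\<lambda>n k. c (D n k))) = (\<Union>n. - (\<Union>k. D n k))"
      unfolding enum_def using \<iota> D(3) by simp
    then show "\<exists>t. M \<subseteq> enum t"
      using D(2) by metis
  qed
qed

theorem theorem2p5:
  fixes C :: "real set set"
  assumes "CH"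
    and "category_base (UNIV :: real set) C"
    and "point_meager UNIV C"
    and "ccc C"
    and "linearly_invariant C"
    and "C \<lesssim> (UNIV :: real set)"
    and "abundant C (UNIV :: real set)"
  shows "\<exists>E F :: real set.
           rare_set UNIV C E \<and> rare_set UNIV C F \<and>
           Q_subspace E \<and> Q_subspace F \<and>
           {e + f | e f. e \<in> E \<and> f \<in> F} = UNIV \<and> E \<inter> F = {0}"
proof -
  obtain enum :: "real \<Rightarrow> real set"
    where enum: "\<forall>t. meager C (enum t)" "\<forall>M. meager C M \<longrightarrow> (\<exists>t. M \<subseteq> enum t)"
    using meager_cofinal_family[OF assms(2,4,6)] by blast
  interpret small_sets "meager C"
    using assms(3,5,7) by (rule small_sets_meager)
  obtain E F where "rare E" "rare F" "Q_subspace E" "Q_subspace F" "E + F = UNIV" "E \<inter> F = {0}"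
    using ex_rare_complementary_subspaces_CH[OF assms(1) enum[rule_format]] by blast
  moreover have "rare_set UNIV C R \<longleftrightarrow> rare R" for R
    unfolding rare_set_def rare_def by simp
  moreover have "{e + f | e f. e \<in> E \<and> f \<in> F} = E + F"
    unfolding set_plus_def by blast
  ultimately show ?thesis
    by auto
qed

end
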